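(* Let $(\mathcal C,\mathbb E,\mathfrak s)$ be an $n$-exangulated category and $\varphi^\bullet:A^\bullet\to B^\bullet$ a morphism in $S(\mathcal C)$, where $A^\bullet=(A_0\xrightarrow{\alpha_0}\cdots\xrightarrow{\alpha_n}A_{n+1}\overset{\delta}{\dashrightarrow})$ and $B^\bullet=(B_0\xrightarrow{\beta_0}\cdots\xrightarrow{\beta_n}B_{n+1}\overset{\delta'}{\dashrightarrow})$. Then $\underline{\varphi^\bullet}$ is an epimorphism in $S(\mathcal C)/\mathcal R_2$ if and only if $[\varphi_{n+1}\ \ \beta_n]:A_{n+1}\oplus B_n\to B_{n+1}$ is a retraction (split epimorphism) in $\mathcal C$.
   Context: $(\mathcal C,\mathbb E,\mathfrak s)$ is an $n$-exangulated category in the sense of Herschend–Liu–Nakaoka; for $\delta\in\mathbb E(C,A)$, $a_*\delta=\mathbb E(C,a)\delta$, $c^*\delta=\mathbb E(c,A)\delta$. $S(\mathcal C)$ is the category whose objects are distinguished $n$-exangles and whose morphisms $A^\bullet\to B^\bullet$ are tuples $(\varphi_0,\dots,\varphi_{n+1})$ making all squares commute with $(\varphi_0)_*\delta=(\varphi_{n+1})^*\delta'$. $\mathcal R_2$ is the ideal of morphisms $\varphi^\bullet$ with $\varphi_{n+1}$ factoring through $\beta_n$, and $\underline{\varphi^\bullet}$ denotes the class in $S(\mathcal C)/\mathcal R_2$. *)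

theory Defs
  imports Main
begin

text \<open>A category is given by objects, arrows (each arrow knows its domain and codomain),
 composition and identities, together with the additive structure (abelian group structure
 on each hom-set, a chosen zero object, chosen biproducts), a bifunctor E with values in
 abelian groups (elements of E(C,A) know their "domain" C and "codomain" A), its
 actions a_* (push) and c^* (pull), and the realization relation:
 rl d X dX means that the complex (X,dX) belongs to the class s(d).\<close>

record ('o, 'm, 'e) exang_data =
  ob  :: "'o set"
  arr :: "'m set"
  dm  :: "'m \<Rightarrow> 'o"
  cd  :: "'m \<Rightarrow> 'o"
  cp  :: "'m \<Rightarrow> 'm \<Rightarrow> 'm"          \<comment> \<open>cp g f = g o f\<close>
  idm :: "'o \<Rightarrow> 'm"
  ad  :: "'m \<Rightarrow> 'm \<Rightarrow> 'm"
  ng  :: "'m \<Rightarrow> 'm"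
  zm  :: "'o \<Rightarrow> 'o \<Rightarrow> 'm"
  zo  :: "'o"
  bp  :: "'o \<Rightarrow> 'o \<Rightarrow> 'o"
  in1 :: "'o \<Rightarrow> 'o \<Rightarrow> 'm"
  in2 :: "'o \<Rightarrow> 'o \<Rightarrow> 'm"
  pr1 :: "'o \<Rightarrow> 'o \<Rightarrow> 'm"
  pr2 :: "'o \<Rightarrow> 'o \<Rightarrow> 'm"
  ext :: "'e set"
  edm :: "'e \<Rightarrow> 'o"                 \<comment> \<open>d \<in> E(C,A): edm d = C\<close>
  ecd :: "'e \<Rightarrow> 'o"                 \<comment> \<open>d \<in> E(C,A): ecd d = A\<close>
  ead :: "'e \<Rightarrow> 'e \<Rightarrow> 'e"
  eng :: "'e \<Rightarrow> 'e"
  ezr :: "'o \<Rightarrow> 'o \<Rightarrow> 'e"          \<comment> \<open>ezr C A = 0 in E(C,A)\<close>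
  psh :: "'m \<Rightarrow> 'e \<Rightarrow> 'e"
  pll :: "'m \<Rightarrow> 'e \<Rightarrow> 'e"
  rl  :: "'e \<Rightarrow> (nat \<Rightarrow> 'o) \<Rightarrow> (nat \<Rightarrow> 'm) \<Rightarrow> bool"

definition hom :: "('o,'m,'e,'z) exang_data_scheme \<Rightarrow> 'o \<Rightarrow> 'o \<Rightarrow> 'm set" where
  "hom C A B = {f \<in> arr C. dm C f = A \<and> cd C f = B}"

definition Ext :: "('o,'m,'e,'z) exang_data_scheme \<Rightarrow> 'o \<Rightarrow> 'o \<Rightarrow> 'e set" where
  "Ext C X A = {d \<in> ext C. edm C d = X \<and> ecd C d = A}"

definition additive_cat :: "('o,'m,'e,'z) exang_data_scheme \<Rightarrow> bool" where
  "additive_cat C \<longleftrightarrow>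
    (\<forall>f\<in>arr C. dm C f \<in> ob C \<and> cd C f \<in> ob C) \<and>
    (\<forall>A\<in>ob C. idm C A \<in> hom C A A) \<and>
    (\<forall>A B D f g. f \<in> hom C A B \<longrightarrow> g \<in> hom C B D \<longrightarrow> cp C g f \<in> hom C A D) \<and>
    (\<forall>A B D E f g h. f \<in> hom C A B \<longrightarrow> g \<in> hom C B D \<longrightarrow> h \<in> hom C D E \<longrightarrow>
        cp C h (cp C g f) = cp C (cp C h g) f) \<and>
    (\<forall>A B f. f \<in> hom C A B \<longrightarrow> cp C (idm C B) f = f \<and> cp C f (idm C A) = f) \<and>
    \<comment> \<open>each hom-set is an abelian group\<close>
    (\<forall>A\<in>ob C. \<forall>B\<in>ob C. zm C A B \<in> hom C A B) \<and>
    (\<forall>A B f g. f \<in> hom C A B \<longrightarrow> g \<in> hom C A B \<longrightarrow> ad C f g \<in> hom C A B) \<and>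
    (\<forall>A B f. f \<in> hom C A B \<longrightarrow> ng C f \<in> hom C A B) \<and>
    (\<forall>A B f g h. f \<in> hom C A B \<longrightarrow> g \<in> hom C A B \<longrightarrow> h \<in> hom C A B \<longrightarrow>
        ad C (ad C f g) h = ad C f (ad C g h)) \<and>
    (\<forall>A B f g. f \<in> hom C A B \<longrightarrow> g \<in> hom C A B \<longrightarrow> ad C f g = ad C g f) \<and>
    (\<forall>A B f. f \<in> hom C A B \<longrightarrow> ad C f (zm C A B) = f \<and> ad C f (ng C f) = zm C A B) \<and>
    \<comment> \<open>composition is bilinear\<close>
    (\<forall>A B D f f' g. f \<in> hom C A B \<longrightarrow> f' \<in> hom C A B \<longrightarrow> g \<in> hom C B D \<longrightarrow>
        cp C g (ad C f f') = ad C (cp C g f) (cp C g f')) \<and>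
    (\<forall>A B D f g g'. f \<in> hom C A B \<longrightarrow> g \<in> hom C B D \<longrightarrow> g' \<in> hom C B D \<longrightarrow>
        cp C (ad C g g') f = ad C (cp C g f) (cp C g' f)) \<and>
    \<comment> \<open>zero object\<close>
    zo C \<in> ob C \<and>
    (\<forall>A\<in>ob C. hom C (zo C) A = {zm C (zo C) A} \<and> hom C A (zo C) = {zm C A (zo C)}) \<and>
    \<comment> \<open>biproducts\<close>
    (\<forall>A\<in>ob C. \<forall>B\<in>ob C. bp C A B \<in> ob C \<and>
        in1 C A B \<in> hom C A (bp C A B) \<and> in2 C A B \<in> hom C B (bp C A B) \<and>
        pr1 C A B \<in> hom C (bp C A B) A \<and> pr2 C A B \<in> hom C (bp C A B) B \<and>
        cp C (pr1 C A B) (in1 C A B) = idm C A \<and> cp C (pr2 C A B) (in2 C A B) = idm C B \<and>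
        cp C (pr1 C A B) (in2 C A B) = zm C B A \<and> cp C (pr2 C A B) (in1 C A B) = zm C A B \<and>
        ad C (cp C (in1 C A B) (pr1 C A B)) (cp C (in2 C A B) (pr2 C A B)) = idm C (bp C A B))"

definition biadditive_E :: "('o,'m,'e,'z) exang_data_scheme \<Rightarrow> bool" where
  "biadditive_E C \<longleftrightarrow>
    (\<forall>d\<in>ext C. edm C d \<in> ob C \<and> ecd C d \<in> ob C) \<and>
    (\<forall>X\<in>ob C. \<forall>A\<in>ob C. ezr C X A \<in> Ext C X A) \<and>
    (\<forall>X A d d'. d \<in> Ext C X A \<longrightarrow> d' \<in> Ext C X A \<longrightarrow> ead C d d' \<in> Ext C X A) \<and>
    (\<forall>X A d. d \<in> Ext C X A \<longrightarrow> eng C d \<in> Ext C X A) \<and>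
    (\<forall>X A d d' d''. d \<in> Ext C X A \<longrightarrow> d' \<in> Ext C X A \<longrightarrow> d'' \<in> Ext C X A \<longrightarrow>
        ead C (ead C d d') d'' = ead C d (ead C d' d'')) \<and>
    (\<forall>X A d d'. d \<in> Ext C X A \<longrightarrow> d' \<in> Ext C X A \<longrightarrow> ead C d d' = ead C d' d) \<and>
    (\<forall>X A d. d \<in> Ext C X A \<longrightarrow> ead C d (ezr C X A) = d \<and> ead C d (eng C d) = ezr C X A) \<and>
    \<comment> \<open>actions of morphisms\<close>
    (\<forall>X A A' a d. a \<in> hom C A A' \<longrightarrow> d \<in> Ext C X A \<longrightarrow> psh C a d \<in> Ext C X A') \<and>
    (\<forall>X X' A c d. c \<in> hom C X' X \<longrightarrow> d \<in> Ext C X A \<longrightarrow> pll C c d \<in> Ext C X' A) \<and>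
    \<comment> \<open>functoriality\<close>
    (\<forall>X A d. d \<in> Ext C X A \<longrightarrow> psh C (idm C A) d = d \<and> pll C (idm C X) d = d) \<and>
    (\<forall>X A A' A'' a b d. a \<in> hom C A A' \<longrightarrow> b \<in> hom C A' A'' \<longrightarrow> d \<in> Ext C X A \<longrightarrow>
        psh C (cp C b a) d = psh C b (psh C a d)) \<and>
    (\<forall>X X' X'' A c c' d. c \<in> hom C X' X \<longrightarrow> c' \<in> hom C X'' X' \<longrightarrow> d \<in> Ext C X A \<longrightarrow>
        pll C (cp C c c') d = pll C c' (pll C c d)) \<and>
    (\<forall>X X' A A' a c d. a \<in> hom C A A' \<longrightarrow> c \<in> hom C X' X \<longrightarrow> d \<in> Ext C X A \<longrightarrow>
        psh C a (pll C c d) = pll C c (psh C a d)) \<and>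
    \<comment> \<open>values in abelian groups: the induced maps are group homomorphisms\<close>
    (\<forall>X A A' a d d'. a \<in> hom C A A' \<longrightarrow> d \<in> Ext C X A \<longrightarrow> d' \<in> Ext C X A \<longrightarrow>
        psh C a (ead C d d') = ead C (psh C a d) (psh C a d')) \<and>
    (\<forall>X X' A c d d'. c \<in> hom C X' X \<longrightarrow> d \<in> Ext C X A \<longrightarrow> d' \<in> Ext C X A \<longrightarrow>
        pll C c (ead C d d') = ead C (pll C c d) (pll C c d')) \<and>
    \<comment> \<open>biadditivity\<close>
    (\<forall>X A A' a a' d. a \<in> hom C A A' \<longrightarrow> a' \<in> hom C A A' \<longrightarrow> d \<in> Ext C X A \<longrightarrow>
        psh C (ad C a a') d = ead C (psh C a d) (psh C a' d)) \<and>
    (\<forall>X X' A c c' d. c \<in> hom C X' X \<longrightarrow> c' \<in> hom C X' X \<longrightarrow> d \<in> Ext C X A \<longrightarrow>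
        pll C (ad C c c') d = ead C (pll C c d) (pll C c' d))"

definition is_complex :: "nat \<Rightarrow> ('o,'m,'e,'z) exang_data_scheme \<Rightarrow> (nat \<Rightarrow> 'o) \<Rightarrow> (nat \<Rightarrow> 'm) \<Rightarrow> bool" where
  "is_complex n C X d \<longleftrightarrow>
    (\<forall>i\<le>Suc n. X i \<in> ob C) \<and>
    (\<forall>i\<le>n. d i \<in> hom C (X i) (X (Suc i))) \<and>
    (\<forall>i<n. cp C (d (Suc i)) (d i) = zm C (X i) (X (Suc (Suc i))))"

definition cmorph :: "nat \<Rightarrow> ('o,'m,'e,'z) exang_data_scheme \<Rightarrow> (nat \<Rightarrow> 'o) \<Rightarrow> (nat \<Rightarrow> 'm)
    \<Rightarrow> (nat \<Rightarrow> 'o) \<Rightarrow> (nat \<Rightarrow> 'm) \<Rightarrow> (nat \<Rightarrow> 'm) \<Rightarrow> bool" where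
  "cmorph n C X d Y e f \<longleftrightarrow>
    (\<forall>i\<le>Suc n. f i \<in> hom C (X i) (Y i)) \<and>
    (\<forall>i\<le>n. cp C (f (Suc i)) (d i) = cp C (e i) (f i))"

definition ccomp :: "('o,'m,'e,'z) exang_data_scheme \<Rightarrow> (nat \<Rightarrow> 'm) \<Rightarrow> (nat \<Rightarrow> 'm) \<Rightarrow> (nat \<Rightarrow> 'm)" where
  "ccomp C g f = (\<lambda>i. cp C (g i) (f i))"

text \<open>Homotopy of morphisms of complexes (standard convention, phi^0 = 0 and phi^{n+2} = 0).\<close>
definition homotopic :: "nat \<Rightarrow> ('o,'m,'e,'z) exang_data_scheme \<Rightarrow> (nat \<Rightarrow> 'o) \<Rightarrow> (nat \<Rightarrow> 'm)
    \<Rightarrow> (nat \<Rightarrow> 'o) \<Rightarrow> (nat \<Rightarrow> 'm) \<Rightarrow> (nat \<Rightarrow> 'm) \<Rightarrow> (nat \<Rightarrow> 'm) \<Rightarrow> bool" where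
  "homotopic n C X d Y e f g \<longleftrightarrow> (\<exists>h.
    (\<forall>i. 1 \<le> i \<and> i \<le> Suc n \<longrightarrow> h i \<in> hom C (X i) (Y (i - 1))) \<and>
    ad C (f 0) (ng C (g 0)) = cp C (h 1) (d 0) \<and>
    (\<forall>i. 1 \<le> i \<and> i \<le> n \<longrightarrow>
        ad C (f i) (ng C (g i)) = ad C (cp C (e (i - 1)) (h i)) (cp C (h (Suc i)) (d i))) \<and>
    ad C (f (Suc n)) (ng C (g (Suc n))) = cp C (e n) (h (Suc n)))"

definition htpy_equiv :: "nat \<Rightarrow> ('o,'m,'e,'z) exang_data_scheme \<Rightarrow> (nat \<Rightarrow> 'o) \<Rightarrow> (nat \<Rightarrow> 'm)
    \<Rightarrow> (nat \<Rightarrow> 'o) \<Rightarrow> (nat \<Rightarrow> 'm) \<Rightarrow> bool" where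
  "htpy_equiv n C X d Y e \<longleftrightarrow> X 0 = Y 0 \<and> X (Suc n) = Y (Suc n) \<and>
    (\<exists>f g. cmorph n C X d Y e f \<and> f 0 = idm C (X 0) \<and> f (Suc n) = idm C (X (Suc n)) \<and>
           cmorph n C Y e X d g \<and> g 0 = idm C (X 0) \<and> g (Suc n) = idm C (X (Suc n)) \<and>
           homotopic n C X d X d (ccomp C g f) (\<lambda>i. idm C (X i)) \<and>
           homotopic n C Y e Y e (ccomp C f g) (\<lambda>i. idm C (Y i)))"

definition n_exangle :: "nat \<Rightarrow> ('o,'m,'e,'z) exang_data_scheme \<Rightarrow> (nat \<Rightarrow> 'o) \<Rightarrow> (nat \<Rightarrow> 'm) \<Rightarrow> 'e \<Rightarrow> bool" where
  "n_exangle n C X d del \<longleftrightarrow>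
    is_complex n C X d \<and> del \<in> Ext C (X (Suc n)) (X 0) \<and>
    psh C (d 0) del = ezr C (X (Suc n)) (X 1) \<and>
    pll C (d n) del = ezr C (X n) (X 0) \<and>
    \<comment> \<open>exactness of C(-,X^0) \<rightarrow> ... \<rightarrow> C(-,X^{n+1}) \<rightarrow> E(-,X^0)\<close>
    (\<forall>W\<in>ob C. \<forall>i. 1 \<le> i \<and> i \<le> n \<longrightarrow> (\<forall>f \<in> hom C W (X i).
        cp C (d i) f = zm C W (X (Suc i)) \<longrightarrow> (\<exists>g \<in> hom C W (X (i - 1)). f = cp C (d (i - 1)) g))) \<and>
    (\<forall>W\<in>ob C. \<forall>f \<in> hom C W (X (Suc n)).
        pll C f del = ezr C W (X 0) \<longrightarrow> (\<exists>g \<in> hom C W (X n). f = cp C (d n) g)) \<and>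
    \<comment> \<open>exactness of C(X^{n+1},-) \<rightarrow> ... \<rightarrow> C(X^0,-) \<rightarrow> E(X^{n+1},-)\<close>
    (\<forall>W\<in>ob C. \<forall>i. 1 \<le> i \<and> i \<le> n \<longrightarrow> (\<forall>g \<in> hom C (X i) W.
        cp C g (d (i - 1)) = zm C (X (i - 1)) W \<longrightarrow> (\<exists>h \<in> hom C (X (Suc i)) W. g = cp C h (d i)))) \<and>
    (\<forall>W\<in>ob C. \<forall>g \<in> hom C (X 0) W.
        psh C g del = ezr C (X (Suc n)) W \<longrightarrow> (\<exists>h \<in> hom C (X 1) W. g = cp C h (d 0)))"

definition cone_obj :: "nat \<Rightarrow> ('o,'m,'e,'z) exang_data_scheme \<Rightarrow> (nat \<Rightarrow> 'o) \<Rightarrow> (nat \<Rightarrow> 'o) \<Rightarrow> nat \<Rightarrow> 'o" where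
  "cone_obj n C X Y i =
    (if i = 0 then X 1 else if i \<le> n then bp C (X (Suc i)) (Y i) else Y (Suc n))"

definition cone_d :: "nat \<Rightarrow> ('o,'m,'e,'z) exang_data_scheme \<Rightarrow> (nat \<Rightarrow> 'o) \<Rightarrow> (nat \<Rightarrow> 'm)
    \<Rightarrow> (nat \<Rightarrow> 'o) \<Rightarrow> (nat \<Rightarrow> 'm) \<Rightarrow> (nat \<Rightarrow> 'm) \<Rightarrow> nat \<Rightarrow> 'm" where
  "cone_d n C X d Y e f i =
    (if i = 0 then
       ad C (cp C (in1 C (X 2) (Y 1)) (ng C (d 1))) (cp C (in2 C (X 2) (Y 1)) (f 1))
     else if i < n then
       ad C (ad C (cp C (in1 C (X (Suc (Suc i))) (Y (Suc i))) (cp C (ng C (d (Suc i))) (pr1 C (X (Suc i)) (Y i))))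
                  (cp C (in2 C (X (Suc (Suc i))) (Y (Suc i))) (cp C (f (Suc i)) (pr1 C (X (Suc i)) (Y i)))))
            (cp C (in2 C (X (Suc (Suc i))) (Y (Suc i))) (cp C (e i) (pr2 C (X (Suc i)) (Y i))))
     else
       ad C (cp C (f (Suc n)) (pr1 C (X (Suc n)) (Y n))) (cp C (e n) (pr2 C (X (Suc n)) (Y n))))"

definition cocone_obj :: "nat \<Rightarrow> ('o,'m,'e,'z) exang_data_scheme \<Rightarrow> (nat \<Rightarrow> 'o) \<Rightarrow> (nat \<Rightarrow> 'o) \<Rightarrow> nat \<Rightarrow> 'o" where
  "cocone_obj n C B A i =
    (if i = 0 then B 0 else if i \<le> n then bp C (B i) (A (i - 1)) else A n)"

definition cocone_d :: "nat \<Rightarrow> ('o,'m,'e,'z) exang_data_scheme \<Rightarrow> (nat \<Rightarrow> 'o) \<Rightarrow> (nat \<Rightarrow> 'm)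
    \<Rightarrow> (nat \<Rightarrow> 'o) \<Rightarrow> (nat \<Rightarrow> 'm) \<Rightarrow> (nat \<Rightarrow> 'm) \<Rightarrow> nat \<Rightarrow> 'm" where
  "cocone_d n C B dB A dA f i =
    (if i = 0 then
       ad C (cp C (in1 C (B 1) (A 0)) (ng C (dB 0))) (cp C (in2 C (B 1) (A 0)) (f 0))
     else if i < n then
       ad C (ad C (cp C (in1 C (B (Suc i)) (A i)) (cp C (ng C (dB i)) (pr1 C (B i) (A (i - 1)))))
                  (cp C (in2 C (B (Suc i)) (A i)) (cp C (f i) (pr1 C (B i) (A (i - 1))))))
            (cp C (in2 C (B (Suc i)) (A i)) (cp C (dA (i - 1)) (pr2 C (B i) (A (i - 1)))))
     else
       ad C (cp C (f n) (pr1 C (B n) (A (n - 1)))) (cp C (dA (n - 1)) (pr2 C (B n) (A (n - 1)))))"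

section \<open>Exact realizations and n-exangulated categories (Herschend-Liu-Nakaoka)\<close>

definition realization :: "nat \<Rightarrow> ('o,'m,'e,'z) exang_data_scheme \<Rightarrow> bool" where
  "realization n C \<longleftrightarrow>
    \<comment> \<open>s(d) is a homotopy equivalence class in C^{n+2}_{(A,C)}\<close>
    (\<forall>del X d. rl C del X d \<longrightarrow> del \<in> ext C \<and> is_complex n C X d \<and>
        X 0 = ecd C del \<and> X (Suc n) = edm C del) \<and>
    (\<forall>del \<in> ext C. \<exists>X d. rl C del X d) \<and>
    (\<forall>del X d Y e. rl C del X d \<longrightarrow> rl C del Y e \<longrightarrow> htpy_equiv n C X d Y e) \<and>
    (\<forall>del X d Y e. rl C del X d \<longrightarrow> is_complex n C Y e \<longrightarrow> htpy_equiv n C X d Y e \<longrightarrow> rl C del Y e) \<and>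
    \<comment> \<open>(R0)\<close>
    (\<forall>del del' a c X d Y e. rl C del X d \<longrightarrow> rl C del' Y e \<longrightarrow>
        a \<in> hom C (ecd C del) (ecd C del') \<longrightarrow> c \<in> hom C (edm C del) (edm C del') \<longrightarrow>
        psh C a del = pll C c del' \<longrightarrow>
        (\<exists>f. cmorph n C X d Y e f \<and> f 0 = a \<and> f (Suc n) = c)) \<and>
    \<comment> \<open>(R1)\<close>
    (\<forall>del X d. rl C del X d \<longrightarrow> n_exangle n C X d del) \<and>
    \<comment> \<open>(R2)\<close>
    (\<forall>A\<in>ob C. rl C (ezr C (zo C) A)
        (\<lambda>i. if i \<le> 1 then A else zo C)
        (\<lambda>i. if i = 0 then idm C A else zm C (if i = 1 then A else zo C) (zo C))) \<and>
    (\<forall>A\<in>ob C. rl C (ezr C A (zo C))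
        (\<lambda>i. if n \<le> i then A else zo C)
        (\<lambda>i. if i = n then idm C A else zm C (zo C) (if Suc i = n then A else zo C)))"

definition inflation :: "('o,'m,'e,'z) exang_data_scheme \<Rightarrow> 'm \<Rightarrow> bool" where
  "inflation C a \<longleftrightarrow> (\<exists>del X d. rl C del X d \<and> d 0 = a)"

definition deflation :: "nat \<Rightarrow> ('o,'m,'e,'z) exang_data_scheme \<Rightarrow> 'm \<Rightarrow> bool" where
  "deflation n C a \<longleftrightarrow> (\<exists>del X d. rl C del X d \<and> d n = a)"

definition n_exangulated :: "nat \<Rightarrow> ('o,'m,'e,'z) exang_data_scheme \<Rightarrow> bool" where
  "n_exangulated n C \<longleftrightarrow> 1 \<le> n \<and> additive_cat C \<and> biadditive_E C \<and> realization n C \<and>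
    \<comment> \<open>(EA1)\<close>
    (\<forall>a0 a1. inflation C a0 \<longrightarrow> inflation C a1 \<longrightarrow> cd C a0 = dm C a1 \<longrightarrow> inflation C (cp C a1 a0)) \<and>
    (\<forall>a0 a1. deflation n C a0 \<longrightarrow> deflation n C a1 \<longrightarrow> cd C a0 = dm C a1 \<longrightarrow> deflation n C (cp C a1 a0)) \<and>
    \<comment> \<open>(EA2)\<close>
    (\<forall>rho c D A Cc X d Y e. rho \<in> Ext C D A \<longrightarrow> c \<in> hom C Cc D \<longrightarrow>
        rl C (pll C c rho) X d \<longrightarrow> rl C rho Y e \<longrightarrow>
        (\<exists>f. cmorph n C X d Y e f \<and> f 0 = idm C A \<and> f (Suc n) = c \<and>
             rl C (psh C (d 0) rho) (cone_obj n C X Y) (cone_d n C X d Y e f))) \<and>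
    \<comment> \<open>(EA2op)\<close>
    (\<forall>rho a D A Cc X d Y e. rho \<in> Ext C Cc D \<longrightarrow> a \<in> hom C D A \<longrightarrow>
        rl C (psh C a rho) X d \<longrightarrow> rl C rho Y e \<longrightarrow>
        (\<exists>f. cmorph n C Y e X d f \<and> f 0 = a \<and> f (Suc n) = idm C Cc \<and>
             rl C (pll C (d n) rho) (cocone_obj n C Y X) (cocone_d n C Y e X d f)))"

section \<open>The category S(C) and the quotient S(C)/R_2\<close>

definition S_obj :: "nat \<Rightarrow> ('o,'m,'e,'z) exang_data_scheme \<Rightarrow> (nat \<Rightarrow> 'o) \<Rightarrow> (nat \<Rightarrow> 'm) \<Rightarrow> 'e \<Rightarrow> bool" where
  "S_obj n C X d del \<longleftrightarrow> rl C del X d"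

definition S_mor :: "nat \<Rightarrow> ('o,'m,'e,'z) exang_data_scheme \<Rightarrow> (nat \<Rightarrow> 'o) \<Rightarrow> (nat \<Rightarrow> 'm) \<Rightarrow> 'e
    \<Rightarrow> (nat \<Rightarrow> 'o) \<Rightarrow> (nat \<Rightarrow> 'm) \<Rightarrow> 'e \<Rightarrow> (nat \<Rightarrow> 'm) \<Rightarrow> bool" where
  "S_mor n C X d del Y e del' f \<longleftrightarrow>
    cmorph n C X d Y e f \<and> psh C (f 0) del = pll C (f (Suc n)) del'"

text \<open>f and g (both X \<rightarrow> Y) are equal in S(C)/R_2 iff f - g lies in R_2, i.e.
  (f - g)_{n+1} factors through the last differential e_n of the target.\<close>
definition R2_equiv :: "nat \<Rightarrow> ('o,'m,'e,'z) exang_data_scheme \<Rightarrow> (nat \<Rightarrow> 'o)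
    \<Rightarrow> (nat \<Rightarrow> 'o) \<Rightarrow> (nat \<Rightarrow> 'm) \<Rightarrow> (nat \<Rightarrow> 'm) \<Rightarrow> (nat \<Rightarrow> 'm) \<Rightarrow> bool" where
  "R2_equiv n C X Y e f g \<longleftrightarrow>
    (\<exists>h \<in> hom C (X (Suc n)) (Y n). ad C (f (Suc n)) (ng C (g (Suc n))) = cp C (e n) h)"

definition S_R2_epi :: "nat \<Rightarrow> ('o,'m,'e,'z) exang_data_scheme \<Rightarrow> (nat \<Rightarrow> 'o) \<Rightarrow> (nat \<Rightarrow> 'm) \<Rightarrow> 'e
    \<Rightarrow> (nat \<Rightarrow> 'o) \<Rightarrow> (nat \<Rightarrow> 'm) \<Rightarrow> 'e \<Rightarrow> (nat \<Rightarrow> 'm) \<Rightarrow> bool" where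
  "S_R2_epi n C X d del Y e del' f \<longleftrightarrow>
    (\<forall>Z z del'' g g'. S_obj n C Z z del'' \<longrightarrow>
        S_mor n C Y e del' Z z del'' g \<longrightarrow> S_mor n C Y e del' Z z del'' g' \<longrightarrow>
        R2_equiv n C X Z z (ccomp C g f) (ccomp C g' f) \<longrightarrow>
        R2_equiv n C Y Z z g g')"

text \<open>[f g] : dom f + dom g \<rightarrow> cod f\<close>
definition copair :: "('o,'m,'e,'z) exang_data_scheme \<Rightarrow> 'm \<Rightarrow> 'm \<Rightarrow> 'm" where
  "copair C f g = ad C (cp C f (pr1 C (dm C f) (dm C g))) (cp C g (pr2 C (dm C f) (dm C g)))"

definition retraction :: "('o,'m,'e,'z) exang_data_scheme \<Rightarrow> 'm \<Rightarrow> bool" where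
  "retraction C r \<longleftrightarrow> r \<in> arr C \<and> (\<exists>s \<in> hom C (cd C r) (dm C r). cp C r s = idm C (cd C r))"

end

theory Submission
  imports Defs
begin

text \<open>
  (\<Leftarrow>) Let \<open>s\<close> be a section of \<open>[\<phi>\<^sub>n\<^sub>+\<^sub>1 \<beta>\<^sub>n]\<close>, and let \<open>\<psi>, \<psi>' : B\<^sup>\<bullet> \<rightarrow> Z\<^sup>\<bullet>\<close>, where \<open>Z\<^sup>\<bullet>\<close>
  has last differential \<open>\<gamma>\<^sub>n\<close>, agree modulo \<open>\<R>\<^sub>2\<close> after composing with \<open>\<phi>\<close>.
  The difference \<open>D = \<psi>\<^sub>n\<^sub>+\<^sub>1 - \<psi>'\<^sub>n\<^sub>+\<^sub>1\<close> satisfies \<open>D \<phi>\<^sub>n\<^sub>+\<^sub>1 = \<gamma>\<^sub>n h\<close> for some \<open>h\<close>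
  by hypothesis, and \<open>D \<beta>\<^sub>n = \<gamma>\<^sub>n (\<psi>\<^sub>n - \<psi>'\<^sub>n)\<close> since \<open>\<psi>, \<psi>'\<close> are morphisms of complexes.
  Hence \<open>D = D [\<phi>\<^sub>n\<^sub>+\<^sub>1 \<beta>\<^sub>n] s = \<gamma>\<^sub>n [h, \<psi>\<^sub>n - \<psi>'\<^sub>n] s\<close> factors through \<open>\<gamma>\<^sub>n\<close>.

  (\<Rightarrow>) Realize \<open>\<phi>\<^sub>n\<^sub>+\<^sub>1\<^sup>*\<delta>'\<close>; by (EA2) the mapping cone of the resulting morphism into
  \<open>B\<^sup>\<bullet>\<close> is a distinguished n-exangle \<open>Z\<^sup>\<bullet>\<close> whose last differential is \<open>[\<phi>\<^sub>n\<^sub>+\<^sub>1 \<beta>\<^sub>n]\<close>, and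
  (R0) yields a morphism \<open>\<kappa> : B\<^sup>\<bullet> \<rightarrow> Z\<^sup>\<bullet>\<close> with \<open>\<kappa>\<^sub>n\<^sub>+\<^sub>1 = 1\<close>. As
  \<open>\<phi>\<^sub>n\<^sub>+\<^sub>1 = [\<phi>\<^sub>n\<^sub>+\<^sub>1 \<beta>\<^sub>n] \<iota>\<^sub>1\<close>, the composite \<open>\<kappa>\<phi>\<close> lies in \<open>\<R>\<^sub>2\<close>, so epimorphy forces
  \<open>\<kappa> \<in> \<R>\<^sub>2\<close>: the identity of \<open>B\<^sub>n\<^sub>+\<^sub>1\<close> factors through \<open>[\<phi>\<^sub>n\<^sub>+\<^sub>1 \<beta>\<^sub>n]\<close>.
\<close>

lemma hom_iff: "f \<in> hom C A B \<longleftrightarrow> f \<in> arr C \<and> dm C f = A \<and> cd C f = B"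
  by (simp add: hom_def)

lemma retractionI:
  assumes "r \<in> hom C A B" "s \<in> hom C B A" "cp C r s = idm C B"
  shows "retraction C r"
  using assms by (auto simp: retraction_def hom_iff)

lemma cone_obj_last: "cone_obj n C X Y (Suc n) = Y (Suc n)"
  by (simp add: cone_obj_def)

lemma cone_obj_penultimate: "1 \<le> n \<Longrightarrow> cone_obj n C X Y n = bp C (X (Suc n)) (Y n)"
  by (simp add: cone_obj_def)

lemma cone_d_last:
  assumes "1 \<le> n" "f (Suc n) \<in> hom C (X (Suc n)) D" "e n \<in> hom C (Y n) D"
  shows "cone_d n C X d Y e f n = copair C (f (Suc n)) (e n)"
  using assms by (simp add: cone_d_def copair_def hom_iff)

lemma is_complex_ob: "is_complex n C X d \<Longrightarrow> i \<le> Suc n \<Longrightarrow> X i \<in> ob C"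
  by (simp add: is_complex_def)

lemma is_complex_hom: "is_complex n C X d \<Longrightarrow> i \<le> n \<Longrightarrow> d i \<in> hom C (X i) (X (Suc i))"
  by (simp add: is_complex_def)

lemma cmorph_hom: "cmorph n C X d Y e f \<Longrightarrow> i \<le> Suc n \<Longrightarrow> f i \<in> hom C (X i) (Y i)"
  by (simp add: cmorph_def)

lemma cmorph_comm: "cmorph n C X d Y e f \<Longrightarrow> i \<le> n \<Longrightarrow> cp C (f (Suc i)) (d i) = cp C (e i) (f i)"
  by (simp add: cmorph_def)

locale additive_category =
  fixes C :: "('o,'m,'e,'z) exang_data_scheme"
  assumes additive: "additive_cat C"
begin

lemma hom_ob: "f \<in> hom C A B \<Longrightarrow> A \<in> ob C \<and> B \<in> ob C"
proof -
  have "\<forall>f\<in>arr C. dm C f \<in> ob C \<and> cd C f \<in> ob C"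
    using additive unfolding additive_cat_def by simp
  then show "f \<in> hom C A B \<Longrightarrow> A \<in> ob C \<and> B \<in> ob C" by (auto simp: hom_iff)
qed

lemma id_hom: "A \<in> ob C \<Longrightarrow> idm C A \<in> hom C A A"
  using additive unfolding additive_cat_def by simp

lemma cp_hom: "f \<in> hom C A B \<Longrightarrow> g \<in> hom C B D \<Longrightarrow> cp C g f \<in> hom C A D"
  using additive unfolding additive_cat_def by simp

lemma cp_assoc:
  "f \<in> hom C A B \<Longrightarrow> g \<in> hom C B D \<Longrightarrow> h \<in> hom C D E \<Longrightarrow> cp C h (cp C g f) = cp C (cp C h g) f"
  using additive unfolding additive_cat_def by simp

lemma cp_id_left: "f \<in> hom C A B \<Longrightarrow> cp C (idm C B) f = f"
  using additive unfolding additive_cat_def by simp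

lemma cp_id_right: "f \<in> hom C A B \<Longrightarrow> cp C f (idm C A) = f"
  using additive unfolding additive_cat_def by simp

lemma zm_hom: "A \<in> ob C \<Longrightarrow> B \<in> ob C \<Longrightarrow> zm C A B \<in> hom C A B"
  using additive unfolding additive_cat_def by simp

lemma ad_hom: "f \<in> hom C A B \<Longrightarrow> g \<in> hom C A B \<Longrightarrow> ad C f g \<in> hom C A B"
  using additive unfolding additive_cat_def by simp

lemma ng_hom: "f \<in> hom C A B \<Longrightarrow> ng C f \<in> hom C A B"
  using additive unfolding additive_cat_def by simp

lemma ad_assoc:
  "f \<in> hom C A B \<Longrightarrow> g \<in> hom C A B \<Longrightarrow> h \<in> hom C A B \<Longrightarrow> ad C (ad C f g) h = ad C f (ad C g h)"
  using additive unfolding additive_cat_def by simp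

lemma ad_comm: "f \<in> hom C A B \<Longrightarrow> g \<in> hom C A B \<Longrightarrow> ad C f g = ad C g f"
  using additive unfolding additive_cat_def by simp

lemma ad_zm_right: "f \<in> hom C A B \<Longrightarrow> ad C f (zm C A B) = f"
  using additive unfolding additive_cat_def by simp

lemma ad_ng_right: "f \<in> hom C A B \<Longrightarrow> ad C f (ng C f) = zm C A B"
  using additive unfolding additive_cat_def by simp

lemma cp_ad_right:
  "f \<in> hom C A B \<Longrightarrow> f' \<in> hom C A B \<Longrightarrow> g \<in> hom C B D \<Longrightarrow>
    cp C g (ad C f f') = ad C (cp C g f) (cp C g f')"
  using additive unfolding additive_cat_def by simp

lemma cp_ad_left:
  "f \<in> hom C A B \<Longrightarrow> g \<in> hom C B D \<Longrightarrow> g' \<in> hom C B D \<Longrightarrow>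
    cp C (ad C g g') f = ad C (cp C g f) (cp C g' f)"
  using additive unfolding additive_cat_def by simp

lemma biproduct:
  assumes "A \<in> ob C" "B \<in> ob C"
  shows "in1 C A B \<in> hom C A (bp C A B)"
    and "pr1 C A B \<in> hom C (bp C A B) A" and "pr2 C A B \<in> hom C (bp C A B) B"
    and "cp C (pr1 C A B) (in1 C A B) = idm C A" and "cp C (pr2 C A B) (in1 C A B) = zm C A B"
  using additive assms unfolding additive_cat_def by simp_all

lemma ad_zm_left: "f \<in> hom C A B \<Longrightarrow> ad C (zm C A B) f = f"
  using ad_comm[OF zm_hom] ad_zm_right hom_ob by simp

lemma idempotent_eq_zm:
  assumes y: "y \<in> hom C A B" and "ad C y y = y"
  shows "y = zm C A B"
proof -
  have "y = ad C (ad C y y) (ng C y)"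
    using ad_assoc[OF y y ng_hom[OF y]] ad_ng_right[OF y] ad_zm_right[OF y] by simp
  also have "\<dots> = zm C A B"
    using \<open>ad C y y = y\<close> ad_ng_right[OF y] by simp
  finally show ?thesis .
qed

lemma ng_unique:
  assumes a: "a \<in> hom C A B" and b: "b \<in> hom C A B" and "ad C a b = zm C A B"
  shows "b = ng C a"
proof -
  have n: "ng C a \<in> hom C A B" using a by (rule ng_hom)
  have "b = ad C b (ad C a (ng C a))" using ad_ng_right[OF a] ad_zm_right[OF b] by simp
  also have "\<dots> = ad C (ad C a b) (ng C a)" using ad_assoc[OF b a n] ad_comm[OF a b] by simp
  also have "\<dots> = ng C a" using \<open>ad C a b = zm C A B\<close> ad_zm_left[OF n] by simp
  finally show ?thesis .
qed

lemma ng_zm: "A \<in> ob C \<Longrightarrow> B \<in> ob C \<Longrightarrow> ng C (zm C A B) = zm C A B"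
  using ng_unique[OF zm_hom zm_hom ad_zm_right[OF zm_hom]] by simp

lemma cp_zm_left:
  assumes f: "f \<in> hom C A B" and "D \<in> ob C"
  shows "cp C (zm C B D) f = zm C A D"
proof (rule idempotent_eq_zm)
  have z: "zm C B D \<in> hom C B D" using zm_hom hom_ob[OF f] \<open>D \<in> ob C\<close> by blast
  show "cp C (zm C B D) f \<in> hom C A D" using cp_hom[OF f z] .
  show "ad C (cp C (zm C B D) f) (cp C (zm C B D) f) = cp C (zm C B D) f"
    using cp_ad_left[OF f z z] ad_zm_right[OF z] by simp
qed

lemma cp_zm_right:
  assumes g: "g \<in> hom C B D" and "A \<in> ob C"
  shows "cp C g (zm C A B) = zm C A D"
proof (rule idempotent_eq_zm)
  have z: "zm C A B \<in> hom C A B" using zm_hom hom_ob[OF g] \<open>A \<in> ob C\<close> by blast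
  show "cp C g (zm C A B) \<in> hom C A D" using cp_hom[OF z g] .
  show "ad C (cp C g (zm C A B)) (cp C g (zm C A B)) = cp C g (zm C A B)"
    using cp_ad_right[OF z z g] ad_zm_right[OF z] by simp
qed

lemma cp_ng_left:
  assumes f: "f \<in> hom C A B" and g: "g \<in> hom C B D"
  shows "cp C (ng C g) f = ng C (cp C g f)"
proof (rule ng_unique)
  show "cp C g f \<in> hom C A D" "cp C (ng C g) f \<in> hom C A D"
    using f g ng_hom cp_hom by blast+
  show "ad C (cp C g f) (cp C (ng C g) f) = zm C A D"
    using cp_ad_left[OF f g ng_hom[OF g]] ad_ng_right[OF g] cp_zm_left[OF f] hom_ob[OF g] by simp
qed

lemma cp_ng_right:
  assumes f: "f \<in> hom C A B" and g: "g \<in> hom C B D"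
  shows "cp C g (ng C f) = ng C (cp C g f)"
proof (rule ng_unique)
  show "cp C g f \<in> hom C A D" "cp C g (ng C f) \<in> hom C A D"
    using f g ng_hom cp_hom by blast+
  show "ad C (cp C g f) (cp C g (ng C f)) = zm C A D"
    using cp_ad_right[OF f ng_hom[OF f] g] ad_ng_right[OF f] cp_zm_right[OF g] hom_ob[OF f] by simp
qed

lemma cp_diff_left:
  "f \<in> hom C A B \<Longrightarrow> g \<in> hom C B D \<Longrightarrow> g' \<in> hom C B D \<Longrightarrow>
    cp C (ad C g (ng C g')) f = ad C (cp C g f) (ng C (cp C g' f))"
  by (simp add: cp_ad_left ng_hom cp_ng_left)

lemma cp_diff_right:
  "f \<in> hom C A B \<Longrightarrow> f' \<in> hom C A B \<Longrightarrow> g \<in> hom C B D \<Longrightarrow>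
    cp C g (ad C f (ng C f')) = ad C (cp C g f) (ng C (cp C g f'))"
  by (simp add: cp_ad_right ng_hom cp_ng_right)

lemma copair_eq:
  "f \<in> hom C A D \<Longrightarrow> g \<in> hom C B D \<Longrightarrow>
    copair C f g = ad C (cp C f (pr1 C A B)) (cp C g (pr2 C A B))"
  by (simp add: copair_def hom_iff)

lemma copair_hom:
  assumes f: "f \<in> hom C A D" and g: "g \<in> hom C B D"
  shows "copair C f g \<in> hom C (bp C A B) D"
proof -
  have "A \<in> ob C" "B \<in> ob C" using hom_ob f g by blast+
  then show ?thesis
    using copair_eq[OF f g] ad_hom cp_hom[OF biproduct(2) f] cp_hom[OF biproduct(3) g] by simp
qed

lemma cp_copair:
  assumes f: "f \<in> hom C A D" and g: "g \<in> hom C B D" and h: "h \<in> hom C D E"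
  shows "cp C h (copair C f g) = copair C (cp C h f) (cp C h g)"
proof -
  have "A \<in> ob C" "B \<in> ob C" using hom_ob f g by blast+
  then have p: "pr1 C A B \<in> hom C (bp C A B) A" "pr2 C A B \<in> hom C (bp C A B) B"
    using biproduct by blast+
  have "cp C h (copair C f g) = ad C (cp C (cp C h f) (pr1 C A B)) (cp C (cp C h g) (pr2 C A B))"
    using copair_eq[OF f g] cp_ad_right[OF cp_hom[OF p(1) f] cp_hom[OF p(2) g] h]
      cp_assoc[OF p(1) f h] cp_assoc[OF p(2) g h] by simp
  then show ?thesis using copair_eq cp_hom[OF f h] cp_hom[OF g h] by simp
qed

lemma copair_in1:
  assumes f: "f \<in> hom C A D" and g: "g \<in> hom C B D"
  shows "cp C (copair C f g) (in1 C A B) = f"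
proof -
  have "A \<in> ob C" "B \<in> ob C" using hom_ob f g by blast+
  note bp = biproduct[OF this]
  have "cp C (copair C f g) (in1 C A B) =
      ad C (cp C f (cp C (pr1 C A B) (in1 C A B))) (cp C g (cp C (pr2 C A B) (in1 C A B)))"
    using copair_eq[OF f g] cp_ad_left[OF bp(1) cp_hom[OF bp(2) f] cp_hom[OF bp(3) g]]
      cp_assoc[OF bp(1) bp(2) f] cp_assoc[OF bp(1) bp(3) g] by simp
  then show ?thesis
    using bp(4,5) cp_id_right[OF f] cp_zm_right[OF g \<open>A \<in> ob C\<close>] ad_zm_right[OF f] by simp
qed

lemma factors_through_if_copair_retraction:
  assumes ret: "retraction C (copair C f g)"
    and f: "f \<in> hom C A D" and g: "g \<in> hom C B D" and x: "x \<in> hom C D W" and z: "z \<in> hom C V W"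
    and u: "u \<in> hom C A V" and v: "v \<in> hom C B V"
    and xf: "cp C x f = cp C z u" and xg: "cp C x g = cp C z v"
  shows "\<exists>w \<in> hom C D V. x = cp C z w"
proof -
  have r: "copair C f g \<in> hom C (bp C A B) D" using copair_hom[OF f g] .
  then obtain s where s: "s \<in> hom C D (bp C A B)" and rs: "cp C (copair C f g) s = idm C D"
    using ret unfolding retraction_def by (auto simp: hom_iff)
  have uv: "copair C u v \<in> hom C (bp C A B) V" using copair_hom[OF u v] .
  have "x = cp C (cp C x (copair C f g)) s"
    using cp_id_right[OF x] rs cp_assoc[OF s r x] by simp
  also have "cp C x (copair C f g) = cp C z (copair C u v)"
    using cp_copair[OF f g x] cp_copair[OF u v z] xf xg by simp
  finally have "x = cp C z (cp C (copair C u v) s)"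
    using cp_assoc[OF s uv z] by simp
  then show ?thesis using cp_hom[OF s uv] by blast
qed

lemma cmorph_zm:
  assumes X: "is_complex n C X d" and Y: "is_complex n C Y e"
  shows "cmorph n C X d Y e (\<lambda>i. zm C (X i) (Y i))"
  unfolding cmorph_def
proof (intro conjI allI impI)
  show "zm C (X i) (Y i) \<in> hom C (X i) (Y i)" if "i \<le> Suc n" for i
    using that zm_hom is_complex_ob X Y by blast
  show "cp C (zm C (X (Suc i)) (Y (Suc i))) (d i) = cp C (e i) (zm C (X i) (Y i))" if "i \<le> n" for i
    using that cp_zm_left[OF is_complex_hom[OF X]] cp_zm_right[OF is_complex_hom[OF Y]]
      is_complex_ob[OF X] is_complex_ob[OF Y] by simp
qed

lemma R2_equiv_zm_iff:
  assumes "f (Suc n) \<in> hom C (X (Suc n)) (Y (Suc n))" and "g (Suc n) = zm C (X (Suc n)) (Y (Suc n))"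
  shows "R2_equiv n C X Y e f g \<longleftrightarrow> (\<exists>h \<in> hom C (X (Suc n)) (Y n). f (Suc n) = cp C (e n) h)"
  using assms hom_ob ng_zm ad_zm_right unfolding R2_equiv_def by simp

lemma R2_equiv_cancel_if_retraction:
  assumes B: "is_complex n C B b" and Z: "is_complex n C Z z"
    and phi: "cmorph n C A a B b phi" and g: "cmorph n C B b Z z g" and g': "cmorph n C B b Z z g'"
    and ret: "retraction C (copair C (phi (Suc n)) (b n))"
    and eq: "R2_equiv n C A Z z (ccomp C g phi) (ccomp C g' phi)"
  shows "R2_equiv n C B Z z g g'"
proof -
  have c: "phi (Suc n) \<in> hom C (A (Suc n)) (B (Suc n))" using cmorph_hom[OF phi] by simp
  have bn: "b n \<in> hom C (B n) (B (Suc n))" and zn: "z n \<in> hom C (Z n) (Z (Suc n))"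
    using is_complex_hom B Z by blast+
  have gS: "g (Suc n) \<in> hom C (B (Suc n)) (Z (Suc n))" "g' (Suc n) \<in> hom C (B (Suc n)) (Z (Suc n))"
    and gn: "g n \<in> hom C (B n) (Z n)" "g' n \<in> hom C (B n) (Z n)"
    by (simp_all add: cmorph_hom[OF g] cmorph_hom[OF g'])
  define D where "D = ad C (g (Suc n)) (ng C (g' (Suc n)))"
  have D: "D \<in> hom C (B (Suc n)) (Z (Suc n))" unfolding D_def using gS ad_hom ng_hom by blast
  obtain h where h: "h \<in> hom C (A (Suc n)) (Z n)" and Dc: "cp C D (phi (Suc n)) = cp C (z n) h"
    using eq cp_diff_left[OF c gS] unfolding R2_equiv_def ccomp_def D_def by auto
  have "cp C D (b n) = ad C (cp C (g (Suc n)) (b n)) (ng C (cp C (g' (Suc n)) (b n)))"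
    unfolding D_def using cp_diff_left[OF bn gS] .
  also have "\<dots> = cp C (z n) (ad C (g n) (ng C (g' n)))"
    using cmorph_comm[OF g] cmorph_comm[OF g'] cp_diff_right[OF gn zn] by simp
  finally have Db: "cp C D (b n) = cp C (z n) (ad C (g n) (ng C (g' n)))" .
  have "ad C (g n) (ng C (g' n)) \<in> hom C (B n) (Z n)" using gn ad_hom ng_hom by blast
  then show ?thesis
    using factors_through_if_copair_retraction[OF ret c bn D zn h _ Dc Db]
    unfolding R2_equiv_def D_def by blast
qed

end

locale biadditive_E_category = additive_category +
  assumes biadditive: "biadditive_E C"
begin

lemma psh_Ext: "a \<in> hom C A A' \<Longrightarrow> d \<in> Ext C X A \<Longrightarrow> psh C a d \<in> Ext C X A'"
  using biadditive unfolding biadditive_E_def by simp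

lemma pll_Ext: "c \<in> hom C X' X \<Longrightarrow> d \<in> Ext C X A \<Longrightarrow> pll C c d \<in> Ext C X' A"
  using biadditive unfolding biadditive_E_def by simp

lemma pll_id: "d \<in> Ext C X A \<Longrightarrow> pll C (idm C X) d = d"
  using biadditive unfolding biadditive_E_def by simp

lemma psh_ad:
  "a \<in> hom C A A' \<Longrightarrow> a' \<in> hom C A A' \<Longrightarrow> d \<in> Ext C X A \<Longrightarrow>
    psh C (ad C a a') d = ead C (psh C a d) (psh C a' d)"
  using biadditive unfolding biadditive_E_def by simp

lemma pll_ad:
  "c \<in> hom C X' X \<Longrightarrow> c' \<in> hom C X' X \<Longrightarrow> d \<in> Ext C X A \<Longrightarrow>
    pll C (ad C c c') d = ead C (pll C c d) (pll C c' d)"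
  using biadditive unfolding biadditive_E_def by simp

lemma idempotent_eq_ezr:
  assumes y: "y \<in> Ext C X A" and "ead C y y = y"
  shows "y = ezr C X A"
proof -
  have assoc: "ead C (ead C y y) (eng C y) = ead C y (ead C y (eng C y))" and
    inv: "ead C y (eng C y) = ezr C X A" "ead C y (ezr C X A) = y"
    using biadditive y unfolding biadditive_E_def by simp_all
  have "y = ead C y (ead C y (eng C y))" using inv by simp
  also have "\<dots> = ead C y (eng C y)" using assoc \<open>ead C y y = y\<close> by simp
  also have "\<dots> = ezr C X A" using inv by simp
  finally show ?thesis .
qed

lemma psh_zm:
  assumes "d \<in> Ext C X A" "A \<in> ob C" "A' \<in> ob C"
  shows "psh C (zm C A A') d = ezr C X A'"
proof (rule idempotent_eq_ezr)
  have z: "zm C A A' \<in> hom C A A'" using zm_hom assms by blast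
  show "psh C (zm C A A') d \<in> Ext C X A'" using psh_Ext[OF z \<open>d \<in> Ext C X A\<close>] .
  show "ead C (psh C (zm C A A') d) (psh C (zm C A A') d) = psh C (zm C A A') d"
    using psh_ad[OF z z \<open>d \<in> Ext C X A\<close>] ad_zm_right[OF z] by simp
qed

lemma pll_zm:
  assumes "d \<in> Ext C X A" "X \<in> ob C" "X' \<in> ob C"
  shows "pll C (zm C X' X) d = ezr C X' A"
proof (rule idempotent_eq_ezr)
  have z: "zm C X' X \<in> hom C X' X" using zm_hom assms by blast
  show "pll C (zm C X' X) d \<in> Ext C X' A" using pll_Ext[OF z \<open>d \<in> Ext C X A\<close>] .
  show "ead C (pll C (zm C X' X) d) (pll C (zm C X' X) d) = pll C (zm C X' X) d"
    using pll_ad[OF z z \<open>d \<in> Ext C X A\<close>] ad_zm_right[OF z] by simp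
qed

end

locale n_exangulated_category =
  fixes n :: nat and C :: "('o,'m,'e,'z) exang_data_scheme"
  assumes n_exangulated: "n_exangulated n C"

context n_exangulated_category
begin

lemma n_pos: "1 \<le> n"
  using n_exangulated unfolding n_exangulated_def by (elim conjE)

lemma additive_cat: "additive_cat C"
  using n_exangulated unfolding n_exangulated_def by (elim conjE)

lemma biadditive_E: "biadditive_E C"
  using n_exangulated unfolding n_exangulated_def by (elim conjE)

lemma realization: "realization n C"
  using n_exangulated unfolding n_exangulated_def by (elim conjE)

sublocale biadditive_E_category C
  by unfold_locales (rule additive_cat, rule biadditive_E)

lemma rl_Ext_complex:
  assumes "rl C del X d"
  shows "del \<in> Ext C (X (Suc n)) (X 0)" and "is_complex n C X d"
proof -
  have "\<forall>del X d. rl C del X d \<longrightarrow> del \<in> ext C \<and> is_complex n C X d \<and>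
      X 0 = ecd C del \<and> X (Suc n) = edm C del"
    using realization unfolding realization_def by (elim conjE)
  then show "del \<in> Ext C (X (Suc n)) (X 0)" and "is_complex n C X d"
    using assms unfolding Ext_def by auto
qed

lemmas rl_Ext = rl_Ext_complex(1) and rl_complex = rl_Ext_complex(2)

lemma rl_exists: "del \<in> ext C \<Longrightarrow> \<exists>X d. rl C del X d"
proof -
  have "\<forall>del \<in> ext C. \<exists>X d. rl C del X d"
    using realization unfolding realization_def by (elim conjE)
  then show "del \<in> ext C \<Longrightarrow> \<exists>X d. rl C del X d" by blast
qed

lemma R0:
  assumes "rl C del X d" "rl C del' Y e"
    "a \<in> hom C (ecd C del) (ecd C del')" "c \<in> hom C (edm C del) (edm C del')"
    "psh C a del = pll C c del'"
  shows "\<exists>f. cmorph n C X d Y e f \<and> f 0 = a \<and> f (Suc n) = c"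
proof -
  have "\<forall>del del' a c X d Y e. rl C del X d \<longrightarrow> rl C del' Y e \<longrightarrow>
      a \<in> hom C (ecd C del) (ecd C del') \<longrightarrow> c \<in> hom C (edm C del) (edm C del') \<longrightarrow>
      psh C a del = pll C c del' \<longrightarrow> (\<exists>f. cmorph n C X d Y e f \<and> f 0 = a \<and> f (Suc n) = c)"
    using realization unfolding realization_def by (elim conjE)
  then show ?thesis using assms by blast
qed

lemma EA2:
  assumes "rho \<in> Ext C D A" "c \<in> hom C Cc D" "rl C (pll C c rho) X d" "rl C rho Y e"
  shows "\<exists>f. cmorph n C X d Y e f \<and> f 0 = idm C A \<and> f (Suc n) = c \<and>
    rl C (psh C (d 0) rho) (cone_obj n C X Y) (cone_d n C X d Y e f)"
proof -
  have "\<forall>rho c D A Cc X d Y e. rho \<in> Ext C D A \<longrightarrow> c \<in> hom C Cc D \<longrightarrow>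
      rl C (pll C c rho) X d \<longrightarrow> rl C rho Y e \<longrightarrow>
      (\<exists>f. cmorph n C X d Y e f \<and> f 0 = idm C A \<and> f (Suc n) = c \<and>
        rl C (psh C (d 0) rho) (cone_obj n C X Y) (cone_d n C X d Y e f))"
    using n_exangulated unfolding n_exangulated_def by (elim conjE)
  then show ?thesis using assms by blast
qed

lemma S_mor_zm:
  assumes "rl C del X d" "rl C del' Y e"
  shows "S_mor n C X d del Y e del' (\<lambda>i. zm C (X i) (Y i))"
proof -
  have X: "is_complex n C X d" and Y: "is_complex n C Y e" using assms rl_complex by blast+
  have "psh C (zm C (X 0) (Y 0)) del = ezr C (X (Suc n)) (Y 0)"
    using psh_zm[OF rl_Ext[OF assms(1)]] is_complex_ob[OF X] is_complex_ob[OF Y] by simp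
  moreover have "pll C (zm C (X (Suc n)) (Y (Suc n))) del' = ezr C (X (Suc n)) (Y 0)"
    using pll_zm[OF rl_Ext[OF assms(2)]] is_complex_ob[OF X] is_complex_ob[OF Y] by simp
  ultimately show ?thesis unfolding S_mor_def using cmorph_zm[OF X Y] by simp
qed

lemma S_mor_into_cone:
  assumes rB: "rl C del' B b" and c: "c \<in> hom C W (B (Suc n))"
  obtains Z z th k where "rl C th Z z" "S_mor n C B b del' Z z th k" "k (Suc n) = idm C (B (Suc n))"
    "Z n = bp C W (B n)" "Z (Suc n) = B (Suc n)" "z n = copair C c (b n)"
proof -
  have del': "del' \<in> Ext C (B (Suc n)) (B 0)" using rl_Ext[OF rB] .
  obtain X d where rX: "rl C (pll C c del') X d"
    using rl_exists pll_Ext[OF c del'] unfolding Ext_def by blast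
  obtain f where f: "cmorph n C X d B b f" "f (Suc n) = c"
    and rZ: "rl C (psh C (d 0) del') (cone_obj n C X B) (cone_d n C X d B b f)"
    using EA2[OF del' c rX rB] by blast
  define Z z th where "Z = cone_obj n C X B" and "z = cone_d n C X d B b f"
    and "th = psh C (d 0) del'"
  have rZ: "rl C th Z z" using rZ by (simp add: Z_def z_def th_def)
  have X: "X 0 = B 0" "X (Suc n) = W"
    using rl_Ext[OF rX] pll_Ext[OF c del'] unfolding Ext_def by auto
  have d0: "d 0 \<in> hom C (B 0) (X 1)" using is_complex_hom[OF rl_complex[OF rX], of 0] X by simp
  have th: "th \<in> Ext C (B (Suc n)) (X 1)" unfolding th_def using psh_Ext[OF d0 del'] .
  have id: "idm C (B (Suc n)) \<in> hom C (B (Suc n)) (B (Suc n))"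
    using id_hom is_complex_ob[OF rl_complex[OF rB]] by blast
  have pe: "psh C (d 0) del' = pll C (idm C (B (Suc n))) th" using pll_id[OF th] th_def by simp
  obtain k where "cmorph n C B b Z z k" "k 0 = d 0" and kS: "k (Suc n) = idm C (B (Suc n))"
    using R0[OF rB rZ] d0 id del' th pe unfolding Ext_def by auto
  then have "S_mor n C B b del' Z z th k" unfolding S_mor_def using pe th_def by simp
  moreover have "z n = copair C c (b n)"
  proof -
    have fS: "f (Suc n) \<in> hom C (X (Suc n)) (B (Suc n))" using f X c by simp
    have bn: "b n \<in> hom C (B n) (B (Suc n))"
      using is_complex_hom[OF rl_complex[OF rB]] by simp
    have "cone_d n C X d B b f n = copair C (f (Suc n)) (b n)"
      using n_pos fS bn by (rule cone_d_last)
    then show ?thesis unfolding z_def using f(2) by simp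
  qed
  moreover have "Z n = bp C W (B n)" "Z (Suc n) = B (Suc n)"
    unfolding Z_def by (simp_all add: cone_obj_last cone_obj_penultimate[OF n_pos] X)
  ultimately show thesis using that rZ kS by blast
qed

lemma S_R2_epi_of_retraction:
  assumes B: "S_obj n C B b del'" and phi: "S_mor n C A a del B b del' phi"
    and ret: "retraction C (copair C (phi (Suc n)) (b n))"
  shows "S_R2_epi n C A a del B b del' phi"
  unfolding S_R2_epi_def
proof (intro allI impI)
  fix Z z del'' g g'
  assume Z: "S_obj n C Z z del''" and g: "S_mor n C B b del' Z z del'' g"
    and g': "S_mor n C B b del' Z z del'' g'"
    and eq: "R2_equiv n C A Z z (ccomp C g phi) (ccomp C g' phi)"
  have "is_complex n C B b" "is_complex n C Z z"
    using B Z rl_complex unfolding S_obj_def by blast+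
  moreover have "cmorph n C A a B b phi" "cmorph n C B b Z z g" "cmorph n C B b Z z g'"
    using phi g g' unfolding S_mor_def by blast+
  ultimately show "R2_equiv n C B Z z g g'"
    using ret eq by (rule R2_equiv_cancel_if_retraction)
qed

lemma retraction_of_S_R2_epi:
  assumes B: "S_obj n C B b del'" and phi: "S_mor n C A a del B b del' phi"
    and epi: "S_R2_epi n C A a del B b del' phi"
  shows "retraction C (copair C (phi (Suc n)) (b n))"
proof -
  have rB: "rl C del' B b" using B unfolding S_obj_def .
  have c: "phi (Suc n) \<in> hom C (A (Suc n)) (B (Suc n))"
    using phi cmorph_hom unfolding S_mor_def by blast
  have bn: "b n \<in> hom C (B n) (B (Suc n))" using is_complex_hom[OF rl_complex[OF rB]] by simp
  obtain Z z th k where rZ: "rl C th Z z" and k: "S_mor n C B b del' Z z th k"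
    and kS: "k (Suc n) = idm C (B (Suc n))" and Zn: "Z n = bp C (A (Suc n)) (B n)"
    and ZS: "Z (Suc n) = B (Suc n)" and zn: "z n = copair C (phi (Suc n)) (b n)"
    using S_mor_into_cone[OF rB c] .
  define zero where "zero = (\<lambda>i. zm C (B i) (Z i))"
  have BS: "B (Suc n) \<in> ob C" using hom_ob[OF c] by blast
  have kphi: "ccomp C k phi (Suc n) = phi (Suc n)"
    using kS cp_id_left[OF c] by (simp add: ccomp_def)
  have "R2_equiv n C A Z z (ccomp C k phi) (ccomp C zero phi)"
  proof (subst R2_equiv_zm_iff)
    show "ccomp C k phi (Suc n) \<in> hom C (A (Suc n)) (Z (Suc n))" using kphi c ZS by simp
    show "ccomp C zero phi (Suc n) = zm C (A (Suc n)) (Z (Suc n))"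
      using cp_zm_left[OF c BS] ZS by (simp add: ccomp_def zero_def)
    have "in1 C (A (Suc n)) (B n) \<in> hom C (A (Suc n)) (Z n)"
      using biproduct(1) hom_ob[OF c] hom_ob[OF bn] Zn by simp
    moreover have "phi (Suc n) = cp C (z n) (in1 C (A (Suc n)) (B n))"
      using copair_in1[OF c bn] zn by simp
    ultimately show "\<exists>h \<in> hom C (A (Suc n)) (Z n). ccomp C k phi (Suc n) = cp C (z n) h"
      using kphi by auto
  qed
  then have "R2_equiv n C B Z z k zero"
    using epi rZ k S_mor_zm[OF rB rZ] unfolding S_R2_epi_def S_obj_def zero_def by blast
  then obtain s where "s \<in> hom C (B (Suc n)) (Z n)" "idm C (B (Suc n)) = cp C (z n) s"
    using R2_equiv_zm_iff[where f=k and g=zero and X=B and Y=Z and e=z] kS ZS id_hom[OF BS] by (auto simp: zero_def)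
  then show ?thesis
    using retractionI copair_hom[OF c bn] zn Zn by metis
qed

end

theorem lemma4p2:
  fixes C :: "('o, 'm, 'e) exang_data"
  assumes "n_exangulated n C"
    and "S_obj n C A a del"
    and "S_obj n C B b del'"
    and "S_mor n C A a del B b del' phi"
  shows "S_R2_epi n C A a del B b del' phi \<longleftrightarrow> retraction C (copair C (phi (Suc n)) (b n))"
proof -
  interpret n_exangulated_category n C using assms(1) by unfold_locales
  show ?thesis
    using retraction_of_S_R2_epi[OF assms(3,4)] S_R2_epi_of_retraction[OF assms(3,4)] by blast
qed

end
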